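(* Let $\tilde A\in\widetilde{SL}(2,\mathbb R)_+$ and let $a<b$ be fixed points of $\tilde A$ such that $\tilde A(x)>x$ for all $x\in U:=(a,b)$. Then every other interval $U'=(a',b')$ with the same property ($a'<b'$ fixed points of $\tilde A$ with $\tilde A(x)>x$ for all $x\in U'$) is of the form $U'=(a+k\pi,b+k\pi)$ for some $k\in\mathbb Z$. Moreover, the projective curves $U/\langle\tilde A\rangle$ and $U'/\langle\tilde A\rangle$ are isomorphic.
   Context: Let $\pi:\mathbb R\to\mathbb{RP}^1$, $\pi(t)=[\cos t:\sin t]$, and $\bar\pi(t)=(\cos t,\sin t)\in S^1$; $SL(2,\mathbb R)$ acts on $S^1$ by $A\cdot v=Av/\|Av\|$. The universal cover $\widetilde{SL}(2,\mathbb R)$ is realized as the group of diffeomorphisms $\tilde A$ of $\mathbb R$ for which there exists $A\in SL(2,\mathbb R)$ with $\bar\pi\circ\tilde A=A\cdot\bar\pi$. $\widetilde{SL}(2,\mathbb R)_+$ denotes the set of $\tilde A\in\widetilde{SL}(2,\mathbb R)$ such that $\tilde A(x)>x$ for at least one $x\in\mathbb R$. Intervals of $\mathbb R$ carry the projective structure pulled back from $\mathbb{RP}^1$ by $\pi$; elements of $\widetilde{SL}(2,\mathbb R)$ act by projective maps, and $\langle\tilde A\rangle$ acts freely and properly on $U$, so $U/\langle\tilde A\rangle$ is a closed projective curve. *)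

theory Defs
  imports "HOL-Analysis.Analysis"
begin

definition pibar :: "real \<Rightarrow> real^2" where
  "pibar t = (\<chi> i. if i = 1 then cos t else sin t)"

definition sl_act :: "real^2^2 \<Rightarrow> real^2 \<Rightarrow> real^2" where
  "sl_act A v = (1 / norm (A *v v)) *\<^sub>R (A *v v)"

definition diffeo_R :: "(real \<Rightarrow> real) \<Rightarrow> bool" where
  "diffeo_R f \<longleftrightarrow> bij f \<and> (\<forall>x. f differentiable (at x)) \<and> (\<forall>x. inv f differentiable (at x))"

text \<open>Elements of the universal cover $\widetilde{SL}(2,\mathbb R)$, realized as diffeomorphisms of $\mathbb R$.\<close>
definition tildeSL :: "(real \<Rightarrow> real) \<Rightarrow> bool" where
  "tildeSL f \<longleftrightarrow> diffeo_R f \<and>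
     (\<exists>A::real^2^2. det A = 1 \<and> (\<forall>t. pibar (f t) = sl_act A (pibar t)))"

definition tildeSL_plus :: "(real \<Rightarrow> real) \<Rightarrow> bool" where
  "tildeSL_plus f \<longleftrightarrow> tildeSL f \<and> (\<exists>x. f x > x)"

text \<open>Two nonzero vectors represent the same point of $\mathbb{RP}^1$.\<close>
definition proj_eq :: "real^2 \<Rightarrow> real^2 \<Rightarrow> bool" where
  "proj_eq u v \<longleftrightarrow> (\<exists>c. c \<noteq> 0 \<and> u = c *\<^sub>R v)"

text \<open>A map $g$ defined on an open set $V\subseteq\mathbb R$ is projective (for the structure pulled back
  from $\mathbb{RP}^1$ by $\pi$) if locally it is continuous and covers a projective transformation of
  $\mathbb{RP}^1$, i.e. $\pi \circ g = M \circ \pi$ near every point, with $M \in GL(2,\mathbb R)$.\<close>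
definition proj_map_on :: "real set \<Rightarrow> (real \<Rightarrow> real) \<Rightarrow> bool" where
  "proj_map_on V g \<longleftrightarrow> open V \<and>
     (\<forall>x\<in>V. \<exists>W. open W \<and> x \<in> W \<and> W \<subseteq> V \<and> continuous_on W g \<and>
        (\<exists>M::real^2^2. det M \<noteq> 0 \<and> (\<forall>t\<in>W. proj_eq (pibar (g t)) (M *v pibar t))))"

definition iter_int :: "(real \<Rightarrow> real) \<Rightarrow> int \<Rightarrow> real \<Rightarrow> real" where
  "iter_int f n = (if 0 \<le> n then f ^^ nat n else inv f ^^ nat (- n))"

definition orbit :: "(real \<Rightarrow> real) \<Rightarrow> real \<Rightarrow> real set" where
  "orbit f x = range (\<lambda>n. iter_int f n x)"

text \<open>The points of the quotient curve $U/\langle f\rangle$ are the orbits of points of $U$.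
  A map $F : U/\langle f\rangle \to U'/\langle f\rangle$ is projective if it is locally induced by
  projective maps $U \supseteq W \to U'$ (the charts of the quotient being induced from $U$).\<close>
definition proj_quot_map ::
  "(real \<Rightarrow> real) \<Rightarrow> real set \<Rightarrow> real set \<Rightarrow> (real set \<Rightarrow> real set) \<Rightarrow> bool" where
  "proj_quot_map f U U' F \<longleftrightarrow>
     (\<forall>x\<in>U. \<exists>W g. x \<in> W \<and> W \<subseteq> U \<and> g ` W \<subseteq> U' \<and> proj_map_on W g \<and>
        (\<forall>y\<in>W. F (orbit f y) = orbit f (g y)))"

definition proj_curves_iso :: "(real \<Rightarrow> real) \<Rightarrow> real set \<Rightarrow> real set \<Rightarrow> bool" where
  "proj_curves_iso f U U' \<longleftrightarrow>
     (\<exists>F. bij_betw F (orbit f ` U) (orbit f ` U') \<and> proj_quot_map f U U' F \<and>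
          proj_quot_map f U' U (inv_into (orbit f ` U) F))"

end

theory Submission
  imports Defs
begin

(* Let A be the matrix covered by f. The function |A pibar(t)| sin (f t - t) equals the
   cross product pibar(t) x A pibar(t), a quadratic form in pibar(t), i.e. a function
   alpha + beta cos 2t + gamma sin 2t of period pi. The fixed point a makes pibar(a) an
   eigenvector of A with positive eigenvalue; as det A > 0 there is then no eigenvector with
   negative eigenvalue, so f t - t never equals +-pi and, by continuity, |f t - t| < pi
   everywhere. Hence f commutes with translation by pi, and f t - t has the sign of the
   trigonometric form. An interval on which such a form is positive and at whose ends it
   vanishes is determined modulo pi by its left end point, where the form vanishes with
   nonnegative slope. So U' = U + k pi, and translation by k pi, a projective map (a rotation
   of the circle) commuting with f, induces the isomorphism of the quotient curves. *)

lemma pibar_nth [simp]: "pibar t $ 1 = cos t" "pibar t $ 2 = sin t"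
  by (simp_all add: pibar_def)

lemma vec2_eq_iff: "(u::real^2) = v \<longleftrightarrow> u$1 = v$1 \<and> u$2 = v$2"
  by (simp add: vec_eq_iff forall_2)

lemma matrix_vector_mult_nth_2 [simp]:
  "((A::real^2^2) *v v) $ 1 = A$1$1 * v$1 + A$1$2 * v$2"
  "((A::real^2^2) *v v) $ 2 = A$2$1 * v$1 + A$2$2 * v$2"
  by (simp_all add: matrix_vector_mult_def sum_2)

lemma pibar_nonzero: "pibar t \<noteq> 0"
proof
  assume "pibar t = 0"
  hence "cos t = 0" "sin t = 0"
    by (metis pibar_nth zero_index)+
  thus False
    using sin_cos_squared_add[of t] by simp
qed

lemma pibar_add_pi: "pibar (t + pi) = - pibar t"
  by (simp add: vec2_eq_iff)

lemma pibar_diff_pi: "pibar (t - pi) = - pibar t"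
  by (simp add: vec2_eq_iff)

lemma pibar_eq_iff: "pibar s = pibar t \<longleftrightarrow> (\<exists>n::int. s = t + 2 * pi * n)"
  using sin_cos_eq_iff[of s t] by (auto simp: vec2_eq_iff)

definition cross2 :: "real^2 \<Rightarrow> real^2 \<Rightarrow> real" where
  "cross2 u v = u$1 * v$2 - u$2 * v$1"

lemma cross2_pibar: "cross2 (pibar s) (pibar t) = sin (t - s)"
  by (simp add: cross2_def sin_diff algebra_simps)

lemma cross2_scaleR_right: "cross2 u (c *\<^sub>R v) = c * cross2 u v"
  by (simp add: cross2_def algebra_simps)

lemma cross2_matrix_vector_mult: "cross2 (A *v u) (A *v v) = det A * cross2 u v"
  by (simp add: cross2_def det_2 algebra_simps)

lemma det_neg_if_opposite_eigenvalues:
  fixes A :: "real^2^2"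
  assumes u: "A *v u = l *\<^sub>R u" "u \<noteq> 0" "l > 0"
    and v: "A *v v = - m *\<^sub>R v" "v \<noteq> 0" "m > 0"
  shows "det A < 0"
proof (cases "cross2 u v = 0")
  case True
  \<comment> \<open>\<open>u\<close> and \<open>v\<close> are parallel, but the antisymmetric part of \<open>A\<close> makes them orthogonal\<close>
  have "(A *v u) \<bullet> v - u \<bullet> (A *v v) = (A$2$1 - A$1$2) * cross2 u v"
    by (simp add: inner_vec_def sum_2 cross2_def algebra_simps)
  hence "(l + m) * (u \<bullet> v) = 0"
    using True u(1) v(1) by (simp add: algebra_simps)
  hence "u \<bullet> v = 0"
    using u(3) v(3) by simp
  moreover have "(u \<bullet> v)\<^sup>2 + (cross2 u v)\<^sup>2 = (u \<bullet> u) * (v \<bullet> v)"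
    by (simp add: inner_vec_def sum_2 cross2_def power2_eq_square algebra_simps)
  ultimately show ?thesis
    using True u(2) v(2) by simp
next
  case False
  have "(det A + l * m) * cross2 u v = 0"
    using cross2_matrix_vector_mult[of A u v] u(1) v(1) by (simp add: cross2_def algebra_simps)
  hence "det A = - (l * m)"
    using False by simp
  thus ?thesis
    using u(3) v(3) by simp
qed

lemma norm_matrix_vector_mult_pos:
  fixes A :: "real^2^2"
  assumes "det A \<noteq> 0" "v \<noteq> 0"
  shows "norm (A *v v) > 0"
  using assms by (metis invertible_det_nz invertible_def matrix_left_invertible_ker zero_less_norm_iff)

lemma matrix_vector_mult_eq_scaleR_sl_act:
  "A *v v = norm (A *v v) *\<^sub>R sl_act A v" if "A *v v \<noteq> 0"
  using that by (simp add: sl_act_def)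

lemma sl_act_uminus: "sl_act A (- v) = - sl_act A v"
proof -
  have "A *v (- v) = - (A *v v)"
    by (simp add: vec2_eq_iff)
  thus ?thesis
    by (simp add: sl_act_def)
qed

definition trig2 :: "real \<Rightarrow> real \<Rightarrow> real \<Rightarrow> real \<Rightarrow> real" where
  "trig2 \<alpha> \<beta> \<gamma> t = \<alpha> + \<beta> * cos (2 * t) + \<gamma> * sin (2 * t)"

lemma cross2_pibar_matrix_vector_mult:
  "cross2 (pibar t) (A *v pibar t)
     = trig2 ((A$2$1 - A$1$2) / 2) ((A$2$1 + A$1$2) / 2) ((A$2$2 - A$1$1) / 2) t"
  unfolding trig2_def cos_double sin_double cross2_def pibar_nth matrix_vector_mult_nth_2
  using sin_cos_squared_add[of t] by algebra

lemma trig2_add_int_pi: "trig2 \<alpha> \<beta> \<gamma> (t + of_int k * pi) = trig2 \<alpha> \<beta> \<gamma> t"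
proof -
  have "2 * (t + of_int k * pi) = 2 * t + (2 * pi) * of_int k"
    by (simp add: algebra_simps)
  then show ?thesis
    unfolding trig2_def by (simp only: cos_add sin_add) simp
qed

lemma trig2_has_real_derivative:
  "(trig2 \<alpha> \<beta> \<gamma> has_real_derivative 2 * (\<gamma> * cos (2 * t) - \<beta> * sin (2 * t))) (at t)"
  unfolding trig2_def[abs_def] by (auto intro!: derivative_eq_intros simp: algebra_simps)

lemma trig2_slope_nonneg_at_left_zero:
  assumes "a < b" "trig2 \<alpha> \<beta> \<gamma> a = 0" "\<forall>x\<in>{a<..<b}. trig2 \<alpha> \<beta> \<gamma> x > 0"
  shows "\<gamma> * cos (2 * a) - \<beta> * sin (2 * a) \<ge> 0"
proof -
  have "((\<lambda>x. (trig2 \<alpha> \<beta> \<gamma> x - trig2 \<alpha> \<beta> \<gamma> a) / (x - a))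
          \<longlongrightarrow> 2 * (\<gamma> * cos (2 * a) - \<beta> * sin (2 * a))) (at_right a)"
    using trig2_has_real_derivative has_field_derivative_at_within has_field_derivative_iff
    by blast
  moreover have "eventually (\<lambda>x. 0 \<le> (trig2 \<alpha> \<beta> \<gamma> x - trig2 \<alpha> \<beta> \<gamma> a) / (x - a)) (at_right a)"
    using eventually_at_right_real[OF \<open>a < b\<close>]
    by eventually_elim (use assms in \<open>auto simp: zero_le_divide_iff less_imp_le\<close>)
  ultimately have "0 \<le> 2 * (\<gamma> * cos (2 * a) - \<beta> * sin (2 * a))"
    by (rule tendsto_lowerbound) simp
  thus ?thesis
    by simp
qed

lemma trig2_left_zeros_congruent:
  assumes "a < b" "trig2 \<alpha> \<beta> \<gamma> a = 0" "\<forall>x\<in>{a<..<b}. trig2 \<alpha> \<beta> \<gamma> x > 0"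
    and "a' < b'" "trig2 \<alpha> \<beta> \<gamma> a' = 0" "\<forall>x\<in>{a'<..<b'}. trig2 \<alpha> \<beta> \<gamma> x > 0"
  shows "\<exists>k::int. a' = a + of_int k * pi"
proof -
  have nonconst: "\<beta>\<^sup>2 + \<gamma>\<^sup>2 \<noteq> 0"
  proof
    assume "\<beta>\<^sup>2 + \<gamma>\<^sup>2 = 0"
    hence "\<beta> = 0" "\<gamma> = 0"
      by (auto simp: add_nonneg_eq_0_iff)
    moreover have "(a + b) / 2 \<in> {a<..<b}"
      using assms(1) by simp
    ultimately show False
      using assms(2) assms(3)[rule_format, of "(a + b) / 2"] by (simp add: trig2_def)
  qed
  define X where "X = cos (2 * a)"
  define Y where "Y = sin (2 * a)"
  define X' where "X' = cos (2 * a')"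
  define Y' where "Y' = sin (2 * a')"
  \<comment> \<open>\<open>(X, Y)\<close> lies on the line \<open>\<beta> X + \<gamma> Y = - \<alpha>\<close> and the unit circle; the sign of the
    slope \<open>\<gamma> X - \<beta> Y\<close> tells the two intersection points apart\<close>
  have unit: "X\<^sup>2 + Y\<^sup>2 = 1" "X'\<^sup>2 + Y'\<^sup>2 = 1"
    by (simp_all add: X_def Y_def X'_def Y'_def)
  have line: "\<beta> * X + \<gamma> * Y = \<beta> * X' + \<gamma> * Y'"
    using assms(2,5) by (simp add: trig2_def X_def Y_def X'_def Y'_def)
  have "(\<beta> * X + \<gamma> * Y)\<^sup>2 + (\<gamma> * X - \<beta> * Y)\<^sup>2 = (\<beta>\<^sup>2 + \<gamma>\<^sup>2) * (X\<^sup>2 + Y\<^sup>2)"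
    "(\<beta> * X' + \<gamma> * Y')\<^sup>2 + (\<gamma> * X' - \<beta> * Y')\<^sup>2 = (\<beta>\<^sup>2 + \<gamma>\<^sup>2) * (X'\<^sup>2 + Y'\<^sup>2)"
    by algebra+
  hence "(\<gamma> * X - \<beta> * Y)\<^sup>2 = (\<gamma> * X' - \<beta> * Y')\<^sup>2"
    using unit line by simp
  moreover have "\<gamma> * X - \<beta> * Y \<ge> 0" "\<gamma> * X' - \<beta> * Y' \<ge> 0"
    using trig2_slope_nonneg_at_left_zero[OF assms(1-3)] trig2_slope_nonneg_at_left_zero[OF assms(4-6)]
    by (simp_all add: X_def Y_def X'_def Y'_def)
  ultimately have slope: "\<gamma> * X - \<beta> * Y = \<gamma> * X' - \<beta> * Y'"
    by (simp add: power2_eq_iff_nonneg)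
  have "(\<beta>\<^sup>2 + \<gamma>\<^sup>2) * X = (\<beta>\<^sup>2 + \<gamma>\<^sup>2) * X'"
    "(\<beta>\<^sup>2 + \<gamma>\<^sup>2) * Y = (\<beta>\<^sup>2 + \<gamma>\<^sup>2) * Y'"
    using line slope by algebra+
  hence "X' = X" "Y' = Y"
    using nonconst by auto
  hence "pibar (2 * a') = pibar (2 * a)"
    by (simp add: vec2_eq_iff X_def Y_def X'_def Y'_def)
  then obtain n :: int where "2 * a' = 2 * a + 2 * pi * n"
    using pibar_eq_iff by blast
  hence "a' = a + of_int n * pi"
    by (simp add: algebra_simps)
  thus ?thesis ..
qed

lemma trig2_positive_intervals_congruent:
  assumes "a < b" "trig2 \<alpha> \<beta> \<gamma> a = 0" "trig2 \<alpha> \<beta> \<gamma> b = 0" "\<forall>x\<in>{a<..<b}. trig2 \<alpha> \<beta> \<gamma> x > 0"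
    and "a' < b'" "trig2 \<alpha> \<beta> \<gamma> a' = 0" "trig2 \<alpha> \<beta> \<gamma> b' = 0" "\<forall>x\<in>{a'<..<b'}. trig2 \<alpha> \<beta> \<gamma> x > 0"
  shows "\<exists>k::int. a' = a + of_int k * pi \<and> b' = b + of_int k * pi"
proof -
  obtain k :: int where a': "a' = a + of_int k * pi"
    using trig2_left_zeros_congruent[OF assms(1,2,4-6,8)] by blast
  have "b' = b + of_int k * pi"
  proof (rule ccontr)
    assume "b' \<noteq> b + of_int k * pi"
    then consider "b' - of_int k * pi \<in> {a<..<b}" | "b + of_int k * pi \<in> {a'<..<b'}"
      using a' assms(1,5) by force
    thus False
      using assms(3,4,7,8) trig2_add_int_pi[of \<alpha> \<beta> \<gamma> "b' - of_int k * pi" k]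
        trig2_add_int_pi[of \<alpha> \<beta> \<gamma> b k]
      by cases fastforce+
  qed
  thus ?thesis
    using a' by blast
qed

lemma continuous_abs_less_if_avoids:
  fixes g :: "real \<Rightarrow> real"
  assumes "continuous_on UNIV g" "\<bar>g a\<bar> < c" "\<And>x. \<bar>g x\<bar> \<noteq> c"
  shows "\<bar>g x\<bar> < c"
proof (rule ccontr)
  assume "\<not> \<bar>g x\<bar> < c"
  hence between: "g a \<le> c \<and> c \<le> g x \<or> g x \<le> - c \<and> - c \<le> g a"
    using assms(2) by linarith
  have "connected (range g)"
    using connected_continuous_image[OF assms(1) connected_UNIV] .
  hence "c \<in> range g \<or> - c \<in> range g"
    using between connectedD_interval[of "range g" "g a" "g x" c]
      connectedD_interval[of "range g" "g x" "g a" "- c"]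
    by blast
  then obtain y where "g y = c \<or> g y = - c"
    by (metis rangeE)
  moreover have "c > 0"
    using assms(2) by linarith
  ultimately show False
    using assms(3)[of y] by auto
qed

lemma commute_add_int_multiple:
  fixes f :: "real \<Rightarrow> real"
  assumes "\<And>x. f (x + c) = f x + c"
  shows "f (x + of_int k * c) = f x + of_int k * c"
proof (induction k rule: int_induct[where k = 0])
  case (step1 i)
  have "f (x + of_int (i + 1) * c) = f ((x + of_int i * c) + c)"
    by (simp add: algebra_simps)
  also have "\<dots> = f x + of_int i * c + c"
    using assms step1 by simp
  finally show ?case
    by (simp add: algebra_simps)
next
  case (step2 i)
  have "f (x + of_int (i - 1) * c) + c = f (x + of_int i * c)"
    using assms[of "x + of_int (i - 1) * c"] by (simp add: algebra_simps)
  thus ?case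
    using step2 by (simp add: algebra_simps)
qed simp

locale sl2_lift =
  fixes f :: "real \<Rightarrow> real" and A :: "real^2^2"
  assumes det_pos: "det A > 0"
    and continuous_f: "continuous_on UNIV f"
    and lift: "pibar (f t) = sl_act A (pibar t)"
begin

lemma norm_matrix_pibar_pos: "norm (A *v pibar t) > 0"
  using det_pos pibar_nonzero norm_matrix_vector_mult_pos by simp

lemma matrix_pibar: "A *v pibar t = norm (A *v pibar t) *\<^sub>R pibar (f t)"
  using norm_matrix_pibar_pos lift matrix_vector_mult_eq_scaleR_sl_act by force

lemma trig2_eq_sin_displacement:
  "trig2 ((A$2$1 - A$1$2) / 2) ((A$2$1 + A$1$2) / 2) ((A$2$2 - A$1$1) / 2) t
     = norm (A *v pibar t) * sin (f t - t)"
proof -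
  have "cross2 (pibar t) (A *v pibar t)
      = cross2 (pibar t) (norm (A *v pibar t) *\<^sub>R pibar (f t))"
    using arg_cong[OF matrix_pibar[of t], of "cross2 (pibar t)"] .
  thus ?thesis
    by (simp add: cross2_pibar_matrix_vector_mult cross2_scaleR_right cross2_pibar)
qed

lemma no_half_turn:
  assumes "f a = a"
  shows "\<bar>f x - x\<bar> \<noteq> pi"
proof
  assume "\<bar>f x - x\<bar> = pi"
  hence "f x = x + pi \<or> f x = x - pi"
    by (auto simp: abs_if split: if_splits)
  hence "pibar (f x) = - pibar x"
    by (auto simp: pibar_add_pi pibar_diff_pi)
  hence "norm (A *v pibar x) *\<^sub>R pibar (f x) = - norm (A *v pibar x) *\<^sub>R pibar x"
    by simp
  hence "A *v pibar x = - norm (A *v pibar x) *\<^sub>R pibar x"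
    unfolding matrix_pibar[of x, symmetric] .
  moreover have "A *v pibar a = norm (A *v pibar a) *\<^sub>R pibar a"
    using matrix_pibar[of a] unfolding assms .
  ultimately have "det A < 0"
    using det_neg_if_opposite_eigenvalues pibar_nonzero norm_matrix_pibar_pos by blast
  thus False
    using det_pos by simp
qed

lemma displacement_bound:
  assumes "f a = a"
  shows "\<bar>f x - x\<bar> < pi"
proof -
  have "continuous_on UNIV (\<lambda>x. f x - x)"
    using continuous_f by (intro continuous_intros)
  thus ?thesis
    using continuous_abs_less_if_avoids[of "\<lambda>x. f x - x" a pi x] assms no_half_turn[OF assms]
    by simp
qed

lemma add_pi:
  assumes "f a = a"
  shows "f (x + pi) = f x + pi"
proof -
  have "pibar (f (x + pi)) = pibar (f x + pi)"
    by (simp add: lift pibar_add_pi sl_act_uminus)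
  then obtain n :: int where n: "f (x + pi) = f x + pi + 2 * pi * n"
    using pibar_eq_iff by blast
  \<comment> \<open>both displacements \<open>f (x + pi) - (x + pi)\<close> and \<open>f x - x\<close> lie in \<open>(-pi, pi)\<close>\<close>
  have "\<bar>2 * pi * n\<bar> < 2 * pi"
    using displacement_bound[OF assms, of x] displacement_bound[OF assms, of "x + pi"] n
    by linarith
  hence "n = 0"
    by (simp add: abs_mult)
  thus ?thesis
    using n by simp
qed

end

lemma funpow_commute_apply:
  assumes "\<And>x. f (g x) = g (f x)"
  shows "(f ^^ n) (g x) = g ((f ^^ n) x)"
  using assms by (induction n) simp_all

lemma inv_commute_apply:
  assumes "bij f" "\<And>x. f (g x) = g (f x)"
  shows "inv f (g x) = g (inv f x)"
  by (metis assms bij_inv_eq_iff)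

lemma iter_int_commute_apply:
  assumes "bij f" "\<And>x. f (g x) = g (f x)"
  shows "iter_int f n (g x) = g (iter_int f n x)"
  using funpow_commute_apply[of f g] funpow_commute_apply[of "inv f" g]
    inv_commute_apply[of f g, OF assms] assms(2)
  by (simp add: iter_int_def)

lemma orbit_commute:
  assumes "bij f" "\<And>x. f (g x) = g (f x)"
  shows "orbit f (g x) = g ` orbit f x"
  unfolding orbit_def image_image using iter_int_commute_apply[of f g, OF assms] by simp

definition rotation_matrix :: "real \<Rightarrow> real^2^2" where
  "rotation_matrix c = (\<chi> i j. if i = 1 then (if j = 1 then cos c else - sin c)
                                else (if j = 1 then sin c else cos c))"

lemma det_rotation_matrix: "det (rotation_matrix c) = 1"
  by (simp add: det_2 rotation_matrix_def power2_eq_square[symmetric])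

lemma pibar_add_rotation: "pibar (t + c) = rotation_matrix c *v pibar t"
  by (simp add: vec2_eq_iff rotation_matrix_def cos_add sin_add algebra_simps)

lemma proj_map_on_translation: "open V \<Longrightarrow> proj_map_on V ((+) c)"
  unfolding proj_map_on_def
  by (auto intro!: exI[of _ V] exI[of _ "rotation_matrix c"] continuous_intros
      simp: det_rotation_matrix proj_eq_def pibar_add_rotation add.commute)

lemma proj_quot_map_translation:
  assumes "bij f" "\<And>x. f (c + x) = c + f x" "open U"
    and "\<And>y. y \<in> U \<Longrightarrow> F (orbit f y) = orbit f (c + y)"
  shows "proj_quot_map f U ((+) c ` U) F"
  unfolding proj_quot_map_def
  using assms proj_map_on_translation by blast

lemma proj_curves_iso_translation:
  fixes f :: "real \<Rightarrow> real"
  assumes f: "bij f" "\<And>x. f (c + x) = c + f x" and "open U"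
  shows "proj_curves_iso f U ((+) c ` U)"
proof -
  define F where "F = image ((+) c)"
  have F_orbit: "F (orbit f x) = orbit f (c + x)" for x
    unfolding F_def using orbit_commute[of f "(+) c", OF f] by simp
  have "inj_on F (orbit f ` U)"
    unfolding F_def by (rule inj_onI) (simp add: inj_image_eq_iff)
  moreover have "F ` orbit f ` U = orbit f ` (+) c ` U"
    by (simp add: image_image F_orbit)
  ultimately have F_bij: "bij_betw F (orbit f ` U) (orbit f ` (+) c ` U)"
    by (simp add: bij_betw_def)
  have "inv_into (orbit f ` U) F (orbit f y) = orbit f (- c + y)" if "y \<in> (+) c ` U" for y
    using that by (intro inv_into_f_eq[OF bij_betw_imp_inj_on[OF F_bij]]) (auto simp: F_orbit)
  moreover have "(+) (- c) ` (+) c ` U = U"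
    by (simp add: image_image)
  moreover have "f (- c + x) = - c + f x" for x
    using f(2)[of "- c + x"] by simp
  ultimately have "proj_quot_map f ((+) c ` U) U (inv_into (orbit f ` U) F)"
    using proj_quot_map_translation[of f "- c" "(+) c ` U"] f(1) open_translation[OF \<open>open U\<close>]
    by metis
  moreover have "proj_quot_map f U ((+) c ` U) F"
    using proj_quot_map_translation F_orbit f \<open>open U\<close> by blast
  ultimately show ?thesis
    unfolding proj_curves_iso_def using F_bij by blast
qed

lemma image_add_greaterThanLessThan:
  fixes c :: "'a::linordered_ab_group_add"
  shows "(+) c ` {a<..<b} = {c + a<..<c + b}"
proof -
  have "y \<in> (+) c ` {a<..<b}" if "y \<in> {c + a<..<c + b}" for y
    using that by (intro image_eqI[of _ _ "y - c"]) (auto simp: algebra_simps)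
  thus ?thesis
    by auto
qed

theorem mainTheorem8:
  fixes f :: "real \<Rightarrow> real" and a b a' b' :: real
  assumes "tildeSL_plus f"
    and "a < b" and "f a = a" and "f b = b" and "\<forall>x\<in>{a<..<b}. f x > x"
    and "a' < b'" and "f a' = a'" and "f b' = b'" and "\<forall>x\<in>{a'<..<b'}. f x > x"
  shows "(\<exists>k::int. {a'<..<b'} = {a + of_int k * pi<..<b + of_int k * pi})
         \<and> proj_curves_iso f {a<..<b} {a'<..<b'}"
proof -
  obtain A :: "real^2^2" where "det A = 1" "\<And>t. pibar (f t) = sl_act A (pibar t)"
    and f: "bij f" "\<forall>x. f differentiable (at x)"
    using assms(1) unfolding tildeSL_plus_def tildeSL_def diffeo_R_def by blast
  then interpret sl2_lift f A
    by unfold_locales (simp_all add: differentiable_imp_continuous_within continuous_at_imp_continuous_on)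
  obtain \<alpha> \<beta> \<gamma> where Q: "\<And>t. trig2 \<alpha> \<beta> \<gamma> t = norm (A *v pibar t) * sin (f t - t)"
    using trig2_eq_sin_displacement by blast
  have Q_zero: "trig2 \<alpha> \<beta> \<gamma> x = 0" if "f x = x" for x
    using that by (simp add: Q)
  have Q_pos: "trig2 \<alpha> \<beta> \<gamma> x > 0" if "f x > x" for x
    using that sin_gt_zero[of "f x - x"] displacement_bound[OF assms(3), of x] norm_matrix_pibar_pos[of x]
    by (simp add: Q)
  obtain k :: int where k: "a' = a + of_int k * pi" "b' = b + of_int k * pi"
    using trig2_positive_intervals_congruent[OF assms(2) Q_zero[OF assms(3)] Q_zero[OF assms(4)] _
        assms(6) Q_zero[OF assms(7)] Q_zero[OF assms(8)]] assms(5,9) Q_pos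
    by blast
  have "f (of_int k * pi + x) = of_int k * pi + f x" for x
    using commute_add_int_multiple[of f pi x k] add_pi[OF assms(3)] by (simp add: add.commute)
  hence "proj_curves_iso f {a<..<b} ((+) (of_int k * pi) ` {a<..<b})"
    by (rule proj_curves_iso_translation[OF f(1) _ open_greaterThanLessThan])
  moreover have "(+) (of_int k * pi) ` {a<..<b} = {a'<..<b'}"
    unfolding image_add_greaterThanLessThan k by (simp add: add.commute)
  ultimately show ?thesis
    using k by auto
qed

end
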